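(* Fix a dimension $D\geqslant 2$. There is a constant $C>0$ (depending only on $D$) such that for every integer $n\geqslant 2$, every real $s$, and every integer $k$ with $0\leqslant k<n$, $$\delta(n,s,k)\leqslant C\,\frac{s}{(k+1)^{1/D}},$$ i.e. $\delta(n,s,k)=O\big(s/(k+1)^{1/D}\big)$.
   Context: For a graph $G$ whose vertices are points in $\mathbb{R}^D$, each edge $(u,v)$ has weight equal to the Euclidean distance $d(u,v)$ (edges may cross or overlap), and $d_G(u,v)$ is the length of a shortest path in $G$ between $u$ and $v$. The dilation of $G$ is $\Delta(G)=\max_{u\neq v\in V(G)} d_G(u,v)/d(u,v)$. For a finite set $S$ of $n$ points and an integer $k\ge0$, $\Delta(S,k)$ is the minimum of $\Delta(G)$ over all graphs $G$ with vertex set exactly $S$ and exactly $n-1+k$ edges. The spread $s(S)$ of a finite point set $S$ with $|S|\ge2$ is the ratio of the largest to the smallest pairwise Euclidean distance in $S$. $\delta(n,s,k)=\sup\{\Delta(S,k): S\subset\mathbb{R}^D,\ |S|=n,\ s(S)\leqslant s\}$. *)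

theory Defs
  imports "HOL-Analysis.Analysis" "HOL-Library.Extended_Real"
begin

definition possible_edges :: "'a set \<Rightarrow> 'a set set" where
  "possible_edges S = {{x, y} | x y. x \<in> S \<and> y \<in> S \<and> x \<noteq> y}"

definition is_walk :: "'a set set \<Rightarrow> 'a list \<Rightarrow> bool" where
  "is_walk E xs \<longleftrightarrow> xs \<noteq> [] \<and> (\<forall>i. Suc i < length xs \<longrightarrow> {xs ! i, xs ! Suc i} \<in> E)"

definition walk_length :: "'a::metric_space list \<Rightarrow> real" where
  "walk_length xs = (\<Sum>i<length xs - 1. dist (xs ! i) (xs ! Suc i))"

(* Shortest-path distance d_G(u,v); equals \<infinity> if u,v are disconnected. *)
definition graph_dist :: "'a::metric_space set set \<Rightarrow> 'a \<Rightarrow> 'a \<Rightarrow> ereal" where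
  "graph_dist E u v = Inf {ereal (walk_length xs) | xs. is_walk E xs \<and> hd xs = u \<and> last xs = v}"

definition dilation :: "'a::metric_space set \<Rightarrow> 'a set set \<Rightarrow> ereal" where
  "dilation S E = Sup {graph_dist E u v / ereal (dist u v) | u v. u \<in> S \<and> v \<in> S \<and> u \<noteq> v}"

(* \<Delta>(S,k): least dilation of a graph on vertex set S with n-1+k edges, n = |S|.
   (Graphs with at most n-1+k edges: adding edges never increases dilation.) *)
definition Delta :: "'a::metric_space set \<Rightarrow> nat \<Rightarrow> ereal" where
  "Delta S k = Inf {dilation S E | E. E \<subseteq> possible_edges S \<and> card E \<le> card S - 1 + k}"

definition spread :: "'a::metric_space set \<Rightarrow> real" where
  "spread S = Sup {dist x y | x y. x \<in> S \<and> y \<in> S}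
              / Inf {dist x y | x y. x \<in> S \<and> y \<in> S \<and> x \<noteq> y}"

definition delta :: "'a::euclidean_space itself \<Rightarrow> nat \<Rightarrow> real \<Rightarrow> nat \<Rightarrow> ereal" where
  "delta _ n s k = Sup {Delta S k | S :: 'a set. finite S \<and> card S = n \<and> spread S \<le> s}"

end

theory Submission
  imports Defs
begin

text \<open>
  Fix a finite set W of directions such that every unit vector is within 1/4 of one of them, and
  let c = card W. A star already has dilation at most 8 s, which settles k < 2^D c. For larger k,
  take a maximal r-separated subset R of S with r about diam S * (c/k)^(1/D). By a volume
  argument card R \<le> k/c, so the theta graph on R (each point joined to its nearest neighbour in
  each of the c cones, a 2-spanner) together with one edge from every other point to a nearby
  point of R has at most n - 1 + k edges and dilation 2 + O(r / min dist) = 2 + O(s (c/k)^(1/D)).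
  The same volume argument gives n \<le> (3 s)^D, which absorbs the additive 2.
\<close>

section \<open>Walks of bounded length\<close>

lemma is_walk_Cons2 [simp]: "is_walk E (x # y # xs) \<longleftrightarrow> {x, y} \<in> E \<and> is_walk E (y # xs)"
  unfolding is_walk_def by (auto simp: less_Suc_eq_0_disj)

lemma walk_length_Cons2 [simp]: "walk_length (x # y # xs) = dist x y + walk_length (y # xs)"
  by (simp add: walk_length_def sum.lessThan_Suc_shift del: sum.lessThan_Suc)

lemma doubleton_in_possible_edges: "x \<in> S \<Longrightarrow> y \<in> S \<Longrightarrow> x \<noteq> y \<Longrightarrow> {x, y} \<in> possible_edges S"
  unfolding possible_edges_def by blast

lemma possible_edges_mono: "R \<subseteq> S \<Longrightarrow> possible_edges R \<subseteq> possible_edges S"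
  unfolding possible_edges_def by blast

definition reachable_within :: "'a::metric_space set set \<Rightarrow> 'a \<Rightarrow> 'a \<Rightarrow> real \<Rightarrow> bool" where
  "reachable_within E u v L \<longleftrightarrow> (\<exists>xs. is_walk E xs \<and> hd xs = u \<and> last xs = v \<and> walk_length xs \<le> L)"

lemma reachable_within_refl: "reachable_within E u u 0"
  unfolding reachable_within_def by (rule exI[of _ "[u]"]) (simp add: is_walk_def walk_length_def)

lemma reachable_within_mono: "reachable_within E u v a \<Longrightarrow> a \<le> b \<Longrightarrow> reachable_within E u v b"
  unfolding reachable_within_def by force

lemma reachable_within_subset: "reachable_within E u v a \<Longrightarrow> E \<subseteq> F \<Longrightarrow> reachable_within F u v a"
  unfolding reachable_within_def is_walk_def by blast

lemma reachable_within_Cons: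
  assumes "{u, w} \<in> E" and "reachable_within E w v a"
  shows "reachable_within E u v (dist u w + a)"
proof -
  obtain xs where "is_walk E xs" "hd xs = w" "last xs = v" "walk_length xs \<le> a"
    using assms(2) unfolding reachable_within_def by blast
  with assms(1) show ?thesis
    unfolding reachable_within_def by (intro exI[of _ "u # xs"]) (cases xs, simp add: is_walk_def, simp)
qed

lemma reachable_within_edge: "{u, v} \<in> E \<Longrightarrow> reachable_within E u v (dist u v)"
  using reachable_within_Cons[OF _ reachable_within_refl] by fastforce

lemma reachable_within_walk:
  "is_walk E xs \<Longrightarrow> reachable_within E (last xs) v b \<Longrightarrow> reachable_within E (hd xs) v (walk_length xs + b)"
proof (induction xs rule: induct_list012)
  case (3 x y zs)
  then have "reachable_within E x v (dist x y + (walk_length (y # zs) + b))"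
    by (intro reachable_within_Cons) auto
  then show ?case by (simp add: add.assoc)
qed (auto simp: is_walk_def walk_length_def)

lemma reachable_within_trans:
  assumes "reachable_within E u w a" and "reachable_within E w v b"
  shows "reachable_within E u v (a + b)"
proof -
  obtain xs where "is_walk E xs" "hd xs = u" "last xs = w" "walk_length xs \<le> a"
    using assms(1) unfolding reachable_within_def by blast
  with reachable_within_walk[of E xs v b] assms(2) show ?thesis
    by (auto elim: reachable_within_mono)
qed

lemma graph_dist_le: "reachable_within E u v a \<Longrightarrow> graph_dist E u v \<le> ereal a"
  unfolding reachable_within_def graph_dist_def by (auto intro: Inf_lower2)

lemma dilation_le:
  assumes "\<And>u v. u \<in> S \<Longrightarrow> v \<in> S \<Longrightarrow> u \<noteq> v \<Longrightarrow> reachable_within E u v (B * dist u v)"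
  shows "dilation S E \<le> ereal B"
  unfolding dilation_def
proof (rule Sup_least, clarify)
  fix u v assume uv: "u \<in> S" "v \<in> S" "u \<noteq> v"
  then have d: "dist u v > 0" by simp
  have "graph_dist E u v / ereal (dist u v) \<le> ereal (B * dist u v) / ereal (dist u v)"
    using graph_dist_le[OF assms[OF uv]] d by (intro ereal_divide_right_mono) auto
  also have "\<dots> = ereal B" using d by simp
  finally show "graph_dist E u v / ereal (dist u v) \<le> ereal B" .
qed

section \<open>Separated sets and packing\<close>

definition separated :: "real \<Rightarrow> 'a::metric_space set \<Rightarrow> bool" where
  "separated r R \<longleftrightarrow> (\<forall>x\<in>R. \<forall>y\<in>R. x \<noteq> y \<longrightarrow> r \<le> dist x y)"

lemma obtain_separated_net:
  fixes S :: "'a::metric_space set"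
  assumes "finite S" "S \<noteq> {}" "r > 0"
  obtains R where "R \<subseteq> S" "R \<noteq> {}" "separated r R" "\<And>x. x \<in> S \<Longrightarrow> \<exists>y\<in>R. dist x y \<le> r"
proof -
  define F where "F = {R. R \<subseteq> S \<and> R \<noteq> {} \<and> separated r R}"
  obtain x0 where "x0 \<in> S" using assms(2) by blast
  then have "{x0} \<in> F" by (simp add: F_def separated_def)
  moreover have "\<forall>R. R \<in> F \<longrightarrow> card R < card S + 1"
    using assms(1) by (auto simp: F_def intro: card_mono le_imp_less_Suc)
  ultimately obtain R where R: "R \<in> F" and max: "\<And>R'. R' \<in> F \<Longrightarrow> card R' \<le> card R"
    using ex_has_greatest_nat[of "\<lambda>R. R \<in> F" "{x0}" card] by blast
  have "finite R" using R assms(1) finite_subset unfolding F_def by blast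
  have "\<exists>y\<in>R. dist x y \<le> r" if "x \<in> S" for x
  proof (rule ccontr)
    assume "\<not> (\<exists>y\<in>R. dist x y \<le> r)"
    then have far: "\<And>y. y \<in> R \<Longrightarrow> r < dist x y" by force
    then have "x \<notin> R" using assms(3) by fastforce
    have "insert x R \<in> F" using R far that unfolding F_def separated_def
      by (auto simp: dist_commute less_imp_le)
    then have "card (insert x R) \<le> card R" by (rule max)
    with \<open>x \<notin> R\<close> \<open>finite R\<close> show False by simp
  qed
  with R that show ?thesis unfolding F_def by blast
qed

lemma card_separated_le:
  fixes R :: "'a::euclidean_space set"
  assumes "finite R" "r > 0" "separated r R" "M \<ge> 0" "\<And>x. x \<in> R \<Longrightarrow> dist c x \<le> M"
  shows "real (card R) \<le> (2 * M / r + 1) ^ DIM('a)"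
proof -
  let ?v = "unit_ball_vol (real DIM('a))"
  have "disjoint_family_on (\<lambda>x. ball x (r/2)) R"
    using \<open>separated r R\<close> unfolding disjoint_family_on_def separated_def
    by (auto simp: ball_def) (smt (verit) dist_commute dist_triangle)
  then have "(\<Sum>x\<in>R. emeasure lborel (ball x (r/2))) = emeasure lborel (\<Union>x\<in>R. ball x (r/2))"
    using \<open>finite R\<close> by (intro sum_emeasure) auto
  also have "\<dots> \<le> emeasure lborel (ball c (M + r/2))"
  proof (intro emeasure_mono)
    show "(\<Union>x\<in>R. ball x (r/2)) \<subseteq> ball c (M + r/2)"
    proof
      fix z assume "z \<in> (\<Union>x\<in>R. ball x (r/2))"
      then obtain x where "x \<in> R" "dist x z < r/2" by auto
      then show "z \<in> ball c (M + r/2)" using assms(5)[of x] dist_triangle[of c z x] by simp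
    qed
  qed simp
  finally have "ennreal (real (card R) * (?v * (r/2) ^ DIM('a))) \<le> ennreal (?v * (M + r/2) ^ DIM('a))"
    using assms(2,4) by (simp add: emeasure_ball ennreal_of_nat_eq_real_of_nat ennreal_mult')
  moreover have "?v * (M + r/2) ^ DIM('a) > 0" using assms(2,4) by simp
  ultimately have "?v * (real (card R) * (r/2) ^ DIM('a)) \<le> ?v * (M + r/2) ^ DIM('a)"
    by (subst (asm) ennreal_le_iff2) (auto simp: algebra_simps)
  then have "real (card R) * (r/2) ^ DIM('a) \<le> (M + r/2) ^ DIM('a)"
    by (simp add: mult_le_cancel_left_pos)
  also have "M + r/2 = (2 * M / r + 1) * (r/2)" using assms(2) by (simp add: field_simps)
  finally have "real (card R) * (r/2) ^ DIM('a) \<le> (2 * M / r + 1) ^ DIM('a) * (r/2) ^ DIM('a)"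
    by (simp only: power_mult_distrib)
  then show ?thesis
    using assms(2) by simp
qed

section \<open>Theta graphs\<close>

lemma obtain_finite_sphere_cover:
  assumes "e > 0"
  obtains W :: "'a::euclidean_space set"
  where "finite W" "\<And>x. norm x = 1 \<Longrightarrow> \<exists>w\<in>W. norm (x - w) < e"
proof -
  have cover: "sphere (0::'a) 1 \<subseteq> (\<Union>w\<in>sphere 0 1. ball w e)" using assms by force
  obtain W where "W \<subseteq> sphere 0 1" "finite W" "sphere (0::'a) 1 \<subseteq> (\<Union>w\<in>W. ball w e)"
    using compactE_image[OF compact_sphere open_ball cover] by blast
  then show ?thesis using that[of W] by (auto simp: dist_norm norm_minus_commute subset_eq)
qed

lemma inner_gt_if_norm_diff_lt:
  fixes x y :: "'a::real_inner"
  assumes "norm x = 1" "norm y = 1" "norm (x - y) < 1/2"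
  shows "x \<bullet> y > 7/8"
proof -
  have "x \<bullet> x = 1" "y \<bullet> y = 1"
    using assms(1,2) by (simp_all add: norm_eq_1)
  then have "(norm (x - y))\<^sup>2 = 2 - 2 * (x \<bullet> y)"
    by (simp add: power2_norm_eq_inner inner_diff inner_commute)
  moreover have "(norm (x - y))\<^sup>2 < (1/2)\<^sup>2"
    using assms(3) by (intro power_strict_mono) auto
  ultimately show ?thesis by (simp add: power2_eq_square)
qed

lemma norm_diff_le_if_same_cone:
  fixes p q w :: "'a::real_inner"
  assumes "p \<noteq> 0" "norm p \<le> norm q" "norm (sgn p - w) < 1/4" "norm (sgn q - w) < 1/4"
  shows "norm (p - q) \<le> norm q - norm p / 2"
proof -
  have "q \<noteq> 0" using assms(1,2) by auto
  have "norm (sgn p - sgn q) < 1/2"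
    using norm_triangle_ineq[of "sgn p - w" "w - sgn q"] assms(3,4) norm_minus_commute[of w "sgn q"]
    by simp
  then have "sgn p \<bullet> sgn q > 7/8"
    using assms(1) \<open>q \<noteq> 0\<close> by (intro inner_gt_if_norm_diff_lt) (auto simp: norm_sgn)
  moreover have "p \<bullet> q = norm p * norm q * (sgn p \<bullet> sgn q)"
    using assms(1) \<open>q \<noteq> 0\<close> by (simp add: sgn_div_norm field_simps)
  ultimately have "p \<bullet> q \<ge> 7/8 * (norm p * norm q)"
    using assms(1) \<open>q \<noteq> 0\<close> by (simp add: mult_left_mono)
  moreover have "(norm p)\<^sup>2 \<le> norm p * norm q"
    using assms(2) by (simp add: power2_eq_square mult_left_mono)
  moreover have "(norm (p - q))\<^sup>2 = (norm p)\<^sup>2 + (norm q)\<^sup>2 - 2 * (p \<bullet> q)"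
    by (simp add: power2_norm_eq_inner inner_diff inner_commute)
  moreover have "(norm q - norm p / 2)\<^sup>2 = (norm q)\<^sup>2 - norm p * norm q + (norm p)\<^sup>2 / 4"
    by (simp add: power2_eq_square algebra_simps)
  ultimately have "(norm (p - q))\<^sup>2 \<le> (norm q - norm p / 2)\<^sup>2"
    by linarith
  moreover have "0 \<le> norm q - norm p / 2"
    using assms(2) norm_ge_zero[of p] by linarith
  ultimately show ?thesis
    by (rule power2_le_imp_le)
qed

lemma reachable_within_by_descent:
  fixes R :: "'a::metric_space set"
  assumes "finite R"
    and step: "\<And>u v. u \<in> R \<Longrightarrow> v \<in> R \<Longrightarrow> u \<noteq> v \<Longrightarrow>
      \<exists>z\<in>R. {u, z} \<in> E \<and> dist z v < dist u v \<and> dist u z + t * dist z v \<le> t * dist u v"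
    and "u \<in> R" "v \<in> R"
  shows "reachable_within E u v (t * dist u v)"
  using assms(3)
proof (induction "card {y \<in> R. dist y v < dist u v}" arbitrary: u rule: less_induct)
  case less
  show ?case
  proof (cases "u = v")
    case True
    then show ?thesis using reachable_within_refl by simp
  next
    case False
    then obtain z where z: "z \<in> R" "{u, z} \<in> E" "dist z v < dist u v"
      and shorter: "dist u z + t * dist z v \<le> t * dist u v"
      using step less.prems \<open>v \<in> R\<close> by blast
    have "{y \<in> R. dist y v < dist z v} \<subset> {y \<in> R. dist y v < dist u v}"
      using z by auto
    then have "card {y \<in> R. dist y v < dist z v} < card {y \<in> R. dist y v < dist u v}"
      using \<open>finite R\<close> by (intro psubset_card_mono) auto
    then have "reachable_within E z v (t * dist z v)"
      using less.hyps z(1) by blast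
    from reachable_within_Cons[OF z(2) this] shorter show ?thesis
      by (rule reachable_within_mono)
  qed
qed

definition cone :: "'a::real_inner set \<Rightarrow> 'a \<Rightarrow> 'a \<Rightarrow> 'a set" where
  "cone R u w = {v \<in> R. v \<noteq> u \<and> norm (sgn (v - u) - w) < 1/4}"

definition cone_nearest :: "'a::real_inner set \<Rightarrow> 'a \<Rightarrow> 'a \<Rightarrow> 'a" where
  "cone_nearest R u w = arg_min_on (dist u) (cone R u w)"

definition theta_graph :: "'a::real_inner set \<Rightarrow> 'a set \<Rightarrow> 'a set set" where
  "theta_graph R W = (\<lambda>(u, w). {u, cone_nearest R u w}) ` {(u, w) \<in> R \<times> W. cone R u w \<noteq> {}}"

lemma cone_nearest:
  assumes "finite R" "v \<in> cone R u w"
  shows "cone_nearest R u w \<in> cone R u w" "dist u (cone_nearest R u w) \<le> dist u v"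
proof -
  have "finite (cone R u w)" using \<open>finite R\<close> by (simp add: cone_def)
  moreover have "cone R u w \<noteq> {}" using assms(2) by blast
  ultimately show "cone_nearest R u w \<in> cone R u w" "dist u (cone_nearest R u w) \<le> dist u v"
    unfolding cone_nearest_def using arg_min_if_finite(1) arg_min_least assms(2) by metis+
qed

lemma theta_graph_subset:
  assumes "finite R"
  shows "theta_graph R W \<subseteq> possible_edges R"
proof
  fix e assume "e \<in> theta_graph R W"
  then obtain u w v where "u \<in> R" "v \<in> cone R u w" "e = {u, cone_nearest R u w}"
    unfolding theta_graph_def by blast
  moreover from \<open>v \<in> cone R u w\<close> have "cone_nearest R u w \<in> cone R u w"
    by (rule cone_nearest(1)[OF assms])
  ultimately show "e \<in> possible_edges R"
    by (auto simp: cone_def intro!: doubleton_in_possible_edges)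
qed

lemma card_theta_graph_le:
  assumes "finite R" "finite W"
  shows "card (theta_graph R W) \<le> card R * card W"
proof -
  let ?P = "{(u, w) \<in> R \<times> W. cone R u w \<noteq> {}}"
  have "?P \<subseteq> R \<times> W" by blast
  moreover have "finite (R \<times> W)" using assms by simp
  ultimately have "card (theta_graph R W) \<le> card ?P"
    unfolding theta_graph_def by (intro card_image_le) (rule finite_subset)
  also have "\<dots> \<le> card (R \<times> W)" using \<open>?P \<subseteq> R \<times> W\<close> \<open>finite (R \<times> W)\<close> by (rule card_mono[rotated])
  finally show ?thesis by (simp add: card_cartesian_product)
qed

lemma theta_graph_step:
  assumes "finite R" and cover: "\<And>x. norm x = 1 \<Longrightarrow> \<exists>w\<in>W. norm (x - w) < 1/4"
    and "u \<in> R" "v \<in> R" "u \<noteq> v"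
  shows "\<exists>z\<in>R. {u, z} \<in> theta_graph R W \<and> dist z v < dist u v \<and> dist u z + 2 * dist z v \<le> 2 * dist u v"
proof -
  obtain w where "w \<in> W" "norm (sgn (v - u) - w) < 1/4"
    using cover[of "sgn (v - u)"] \<open>u \<noteq> v\<close> by (auto simp: norm_sgn)
  with assms(3-5) have v: "v \<in> cone R u w" by (simp add: cone_def)
  define z where "z = cone_nearest R u w"
  have "z \<in> cone R u w" "dist u z \<le> dist u v"
    using cone_nearest[OF \<open>finite R\<close> v] by (simp_all add: z_def)
  then have "z \<in> R" "z \<noteq> u" "norm (sgn (z - u) - w) < 1/4" "norm (z - u) \<le> norm (v - u)"
    by (auto simp: cone_def dist_norm norm_minus_commute)
  then have "norm ((z - u) - (v - u)) \<le> norm (v - u) - norm (z - u) / 2"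
    using v by (intro norm_diff_le_if_same_cone) (auto simp: cone_def)
  then have "dist z v \<le> dist u v - dist u z / 2"
    by (simp add: dist_norm norm_minus_commute)
  moreover have "dist u z > 0" using \<open>z \<noteq> u\<close> by simp
  ultimately have "dist z v < dist u v" "dist u z + 2 * dist z v \<le> 2 * dist u v"
    by linarith+
  moreover have "{u, z} \<in> theta_graph R W"
    using \<open>u \<in> R\<close> \<open>w \<in> W\<close> v unfolding theta_graph_def z_def by (intro image_eqI[of _ _ "(u, w)"]) auto
  ultimately show ?thesis using \<open>z \<in> R\<close> by blast
qed

lemma theta_graph_spanner:
  assumes "finite R" "\<And>x. norm x = 1 \<Longrightarrow> \<exists>w\<in>W. norm (x - w) < 1/4" "u \<in> R" "v \<in> R"
  shows "reachable_within (theta_graph R W) u v (2 * dist u v)"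
  using assms(1) theta_graph_step[OF assms(1,2)] assms(3,4) by (rule reachable_within_by_descent)

section \<open>Sparse spanners of point sets of bounded spread\<close>

lemma reachable_within_detour:
  assumes "reachable_within E u u' r" "reachable_within E u' v' (2 * dist u' v')"
    "reachable_within E v' v r" "dist u u' \<le> r" "dist v v' \<le> r"
  shows "reachable_within E u v (2 * dist u v + 6 * r)"
proof -
  have "reachable_within E u v (r + 2 * dist u' v' + r)"
    using reachable_within_trans[OF reachable_within_trans[OF assms(1,2)] assms(3)] .
  moreover have "dist u' v' \<le> dist u v + 2 * r"
    using dist_triangle[of u' v' u] dist_triangle[of u v' v] assms(4,5) by (simp add: dist_commute)
  ultimately show ?thesis by (auto elim: reachable_within_mono)
qed

lemma obtain_net_retraction:
  assumes "r \<ge> 0" "\<And>x. x \<in> S \<Longrightarrow> \<exists>y\<in>R. dist x y \<le> r"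
  obtains \<rho> where "\<And>x. x \<in> S \<Longrightarrow> \<rho> x \<in> R \<and> dist x (\<rho> x) \<le> r \<and> (x \<in> R \<longrightarrow> \<rho> x = x)"
proof -
  have "\<exists>y. y \<in> R \<and> dist x y \<le> r \<and> (x \<in> R \<longrightarrow> y = x)" if "x \<in> S" for x
    using assms(2)[OF that] assms(1) by (cases "x \<in> R") auto
  then show ?thesis using that by metis
qed

lemma obtain_net_spanner:
  fixes S R :: "'a::metric_space set"
  assumes "finite S" "R \<subseteq> S" "T \<subseteq> possible_edges R"
    and spanner: "\<And>u v. u \<in> R \<Longrightarrow> v \<in> R \<Longrightarrow> reachable_within T u v (2 * dist u v)"
    and "r \<ge> 0" and net: "\<And>x. x \<in> S \<Longrightarrow> \<exists>y\<in>R. dist x y \<le> r"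
  obtains E where "E \<subseteq> possible_edges S" "card E \<le> card T + (card S - card R)"
    "\<And>u v. u \<in> S \<Longrightarrow> v \<in> S \<Longrightarrow> reachable_within E u v (2 * dist u v + 6 * r)"
proof -
  obtain \<rho> where \<rho>: "\<And>x. x \<in> S \<Longrightarrow> \<rho> x \<in> R \<and> dist x (\<rho> x) \<le> r \<and> (x \<in> R \<longrightarrow> \<rho> x = x)"
    using obtain_net_retraction[OF \<open>r \<ge> 0\<close> net] by blast
  define E where "E = T \<union> (\<lambda>x. {x, \<rho> x}) ` (S - R)"
  have "{x, \<rho> x} \<in> possible_edges S" if "x \<in> S - R" for x
    using that \<rho>[of x] \<open>R \<subseteq> S\<close> by (intro doubleton_in_possible_edges) auto
  then have "E \<subseteq> possible_edges S"
    using possible_edges_mono[OF \<open>R \<subseteq> S\<close>] \<open>T \<subseteq> possible_edges R\<close> unfolding E_def by blast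
  moreover have "card E \<le> card T + (card S - card R)"
  proof -
    have "card ((\<lambda>x. {x, \<rho> x}) ` (S - R)) \<le> card S - card R"
      using \<open>R \<subseteq> S\<close> \<open>finite S\<close> card_image_le[of "S - R" "\<lambda>x. {x, \<rho> x}"]
      by (simp add: card_Diff_subset finite_subset)
    then show ?thesis using card_Un_le[of T] unfolding E_def by (meson add_left_mono order_trans)
  qed
  moreover have "reachable_within E u v (2 * dist u v + 6 * r)" if "u \<in> S" "v \<in> S" for u v
  proof -
    have attach: "reachable_within E x (\<rho> x) r \<and> reachable_within E (\<rho> x) x r" if "x \<in> S" for x
    proof (cases "x \<in> R")
      case True
      then show ?thesis using \<rho>[OF that] reachable_within_refl[of E x] \<open>r \<ge> 0\<close>
        by (auto intro: reachable_within_mono)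
    next
      case False
      then have "{x, \<rho> x} \<in> E" "{\<rho> x, x} \<in> E" using that by (auto simp: E_def insert_commute)
      then show ?thesis using reachable_within_edge \<rho>[OF that]
        by (metis dist_commute reachable_within_mono)
    qed
    have "reachable_within E (\<rho> u) (\<rho> v) (2 * dist (\<rho> u) (\<rho> v))"
      using spanner \<rho> \<open>u \<in> S\<close> \<open>v \<in> S\<close> by (auto simp: E_def intro: reachable_within_subset)
    then show ?thesis
      using attach[OF \<open>u \<in> S\<close>] attach[OF \<open>v \<in> S\<close>] \<rho>[OF \<open>u \<in> S\<close>] \<rho>[OF \<open>v \<in> S\<close>]
      by (intro reachable_within_detour[of E u "\<rho> u" r "\<rho> v" v]) auto
  qed
  ultimately show ?thesis using that by blast
qed

lemma dilation_le_of_reachable_within_plus: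
  assumes "\<And>u v. u \<in> S \<Longrightarrow> v \<in> S \<Longrightarrow> reachable_within E u v (t * dist u v + a)"
    and "a \<ge> 0" "m > 0" "separated m S"
  shows "dilation S E \<le> ereal (t + a / m)"
proof (rule dilation_le)
  fix u v assume uv: "u \<in> S" "v \<in> S" "u \<noteq> v"
  then have "m \<le> dist u v" using \<open>separated m S\<close> by (simp add: separated_def)
  then have "a \<le> a / m * dist u v"
    using \<open>a \<ge> 0\<close> \<open>m > 0\<close> by (simp add: field_simps mult_left_mono)
  then have "t * dist u v + a \<le> (t + a / m) * dist u v"
    by (simp add: algebra_simps)
  with assms(1)[OF uv(1,2)] show "reachable_within E u v ((t + a / m) * dist u v)"
    by (rule reachable_within_mono)
qed

lemma Delta_le_of_net_spanner:
  fixes S R :: "'a::metric_space set"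
  assumes "finite S" "R \<subseteq> S" "R \<noteq> {}" "T \<subseteq> possible_edges R" "card T \<le> card R - 1 + k"
    and "\<And>u v. u \<in> R \<Longrightarrow> v \<in> R \<Longrightarrow> reachable_within T u v (2 * dist u v)"
    and "r \<ge> 0" "\<And>x. x \<in> S \<Longrightarrow> \<exists>y\<in>R. dist x y \<le> r"
    and "m > 0" "separated m S"
  shows "Delta S k \<le> ereal (2 + 6 * r / m)"
proof -
  obtain E where E: "E \<subseteq> possible_edges S" "card E \<le> card T + (card S - card R)"
    and reach: "\<And>u v. u \<in> S \<Longrightarrow> v \<in> S \<Longrightarrow> reachable_within E u v (2 * dist u v + 6 * r)"
    using obtain_net_spanner[OF assms(1,2,4,6,7,8)] by blast
  have "card R \<ge> 1" "card R \<le> card S"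
    using assms(1-3) by (auto simp: Suc_le_eq card_gt_0_iff finite_subset card_mono)
  then have "card E \<le> card S - 1 + k" using E(2) assms(5) by linarith
  moreover have "dilation S E \<le> ereal (2 + 6 * r / m)"
    using dilation_le_of_reachable_within_plus[OF reach] assms(7,9,10) by simp
  ultimately show ?thesis
    using E(1) unfolding Delta_def by (blast intro: Inf_lower2)
qed

lemma obtain_spread_bounds:
  fixes S :: "'a::metric_space set"
  assumes "finite S" "2 \<le> card S"
  obtains m M where "0 < m" "m \<le> M" "spread S = M / m" "separated m S"
    "\<And>x y. x \<in> S \<Longrightarrow> y \<in> S \<Longrightarrow> dist x y \<le> M"
proof -
  define A where "A = {dist x y | x y. x \<in> S \<and> y \<in> S}"
  define B where "B = {dist x y | x y. x \<in> S \<and> y \<in> S \<and> x \<noteq> y}"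
  have "A = (\<lambda>(x, y). dist x y) ` (S \<times> S)" unfolding A_def by auto
  then have "finite A" using assms(1) by simp
  moreover have "B \<subseteq> A" unfolding A_def B_def by blast
  ultimately have "finite B" by (rule finite_subset[rotated])
  have "\<not> card S \<le> Suc 0" using assms(2) by simp
  then obtain a b where ab: "a \<in> S" "b \<in> S" "a \<noteq> b"
    using card_le_Suc0_iff_eq[OF assms(1)] by blast
  then have "B \<noteq> {}" unfolding B_def by blast
  then have "Inf B \<in> B" using \<open>finite B\<close> by (simp add: cInf_eq_Min)
  then have "Inf B > 0" unfolding B_def by auto
  have sep: "Inf B \<le> dist x y" if "x \<in> S" "y \<in> S" "x \<noteq> y" for x y
    using \<open>finite B\<close> that by (intro cInf_lower) (auto simp: B_def)
  have diam: "dist x y \<le> Sup A" if "x \<in> S" "y \<in> S" for x y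
    using \<open>finite A\<close> that by (intro cSup_upper) (auto simp: A_def)
  have "Inf B \<le> Sup A" using sep[OF ab] diam[OF ab(1,2)] by linarith
  with \<open>Inf B > 0\<close> sep diam show ?thesis
    using that[of "Inf B" "Sup A"] unfolding spread_def separated_def A_def B_def by blast
qed

lemma one_le_spread:
  fixes S :: "'a::metric_space set"
  assumes "finite S" "2 \<le> card S"
  shows "1 \<le> spread S"
proof -
  obtain m M where "0 < m" "m \<le> M" "spread S = M / m"
    using obtain_spread_bounds[OF assms] by metis
  then show ?thesis by simp
qed

lemma card_le_spread_pow:
  fixes S :: "'a::euclidean_space set"
  assumes "finite S" "2 \<le> card S"
  shows "real (card S) \<le> (2 * spread S + 1) ^ DIM('a)"
proof -
  obtain m M where "0 < m" "m \<le> M" "spread S = M / m" "separated m S"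
    and diam: "\<And>x y. x \<in> S \<Longrightarrow> y \<in> S \<Longrightarrow> dist x y \<le> M"
    using obtain_spread_bounds[OF assms] by blast
  obtain x0 where "x0 \<in> S" using assms(2) by force
  then show ?thesis
    using card_separated_le[OF assms(1) \<open>0 < m\<close> \<open>separated m S\<close>, of M x0] diam \<open>0 < m\<close> \<open>m \<le> M\<close>
      \<open>spread S = M / m\<close>
    by simp
qed

lemma Delta_le_spread:
  fixes S :: "'a::metric_space set"
  assumes "finite S" "2 \<le> card S"
  shows "Delta S k \<le> ereal (8 * spread S)"
proof -
  obtain m M where "0 < m" "m \<le> M" "spread S = M / m" "separated m S"
    and diam: "\<And>x y. x \<in> S \<Longrightarrow> y \<in> S \<Longrightarrow> dist x y \<le> M"
    using obtain_spread_bounds[OF assms] by blast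
  obtain x0 where "x0 \<in> S" using assms(2) by force
  have "Delta S k \<le> ereal (2 + 6 * M / m)"
    using \<open>x0 \<in> S\<close> diam \<open>0 < m\<close> \<open>m \<le> M\<close> \<open>separated m S\<close> reachable_within_refl
    by (intro Delta_le_of_net_spanner[OF assms(1), of "{x0}" "{}"]) auto
  also have "2 + 6 * M / m \<le> 8 * spread S"
    using \<open>0 < m\<close> \<open>m \<le> M\<close> \<open>spread S = M / m\<close> by (simp add: field_simps)
  finally show ?thesis by simp
qed

lemma sphere_cover_nonempty:
  fixes W :: "'a::euclidean_space set"
  assumes "\<And>x. norm x = 1 \<Longrightarrow> \<exists>w\<in>W. norm (x - w) < e"
  shows "W \<noteq> {}"
proof -
  obtain b :: 'a where "b \<in> Basis" using nonempty_Basis by blast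
  then show ?thesis using assms[of b] by auto
qed

lemma Delta_le_theta_net:
  fixes S W :: "'a::euclidean_space set"
  assumes "finite S" "x0 \<in> S" "finite W"
    and cover: "\<And>x. norm x = 1 \<Longrightarrow> \<exists>w\<in>W. norm (x - w) < 1/4"
    and "r > 0" "M \<ge> 0" "\<And>x. x \<in> S \<Longrightarrow> dist x0 x \<le> M"
    and "real (card W) * (2 * M / r + 1) ^ DIM('a) \<le> real k"
    and "m > 0" "separated m S"
  shows "Delta S k \<le> ereal (2 + 6 * r / m)"
proof -
  obtain R where "R \<subseteq> S" "R \<noteq> {}" "separated r R" and net: "\<And>x. x \<in> S \<Longrightarrow> \<exists>y\<in>R. dist x y \<le> r"
    using obtain_separated_net[OF assms(1) _ \<open>r > 0\<close>] \<open>x0 \<in> S\<close> by blast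
  have "finite R" using \<open>R \<subseteq> S\<close> assms(1) finite_subset by blast
  have "real (card R) \<le> (2 * M / r + 1) ^ DIM('a)"
    using card_separated_le[OF \<open>finite R\<close> \<open>r > 0\<close> \<open>separated r R\<close> \<open>M \<ge> 0\<close>] assms(7) \<open>R \<subseteq> S\<close> by blast
  then have "real (card R) * real (card W) \<le> real (card W) * (2 * M / r + 1) ^ DIM('a)"
    by (subst mult.commute) (rule mult_right_mono, auto)
  also have "\<dots> \<le> real k" by (rule assms(8))
  finally have "card R * card W \<le> k" by (simp flip: of_nat_mult)
  then show ?thesis
    using card_theta_graph_le[OF \<open>finite R\<close> \<open>finite W\<close>] \<open>r > 0\<close> net \<open>m > 0\<close> \<open>separated m S\<close>
      theta_graph_spanner[OF \<open>finite R\<close> cover]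
    by (intro Delta_le_of_net_spanner[OF assms(1) \<open>R \<subseteq> S\<close> \<open>R \<noteq> {}\<close> theta_graph_subset[OF \<open>finite R\<close>]]) auto
qed

lemma Delta_le_two_plus_spread_mult_root:
  fixes S W :: "'a::euclidean_space set"
  assumes "finite S" "2 \<le> card S" "finite W"
    and cover: "\<And>x. norm x = 1 \<Longrightarrow> \<exists>w\<in>W. norm (x - w) < 1/4"
    and "2 ^ DIM('a) * card W \<le> k"
  shows "Delta S k \<le> ereal (2 + 24 * spread S * root DIM('a) (card W) / root DIM('a) k)"
proof -
  define D where "D = DIM('a)"
  define \<gamma> where "\<gamma> = root D (card W)"
  define \<kappa> where "\<kappa> = root D k"
  obtain m M where "0 < m" "m \<le> M" "spread S = M / m" "separated m S"
    and diam: "\<And>x y. x \<in> S \<Longrightarrow> y \<in> S \<Longrightarrow> dist x y \<le> M"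
    using obtain_spread_bounds[OF assms(1,2)] by blast
  obtain x0 where "x0 \<in> S" using assms(2) by force
  have "D > 0" by (simp add: D_def)
  have "card W > 0" using sphere_cover_nonempty[OF cover] \<open>finite W\<close> by (simp add: card_gt_0_iff)
  then have "\<gamma> > 0" using \<open>D > 0\<close> by (simp add: \<gamma>_def)
  have "real (2 ^ D * card W) \<le> real k" using assms(5) unfolding D_def by (simp only: of_nat_le_iff)
  then have "2 * \<gamma> \<le> \<kappa>"
    using \<open>D > 0\<close> real_root_le_mono[of D "2 ^ D * real (card W)" k]
    by (simp add: \<gamma>_def \<kappa>_def real_root_mult real_root_power_cancel)
  \<comment> \<open>chosen so that the packing bound for the r-net R yields card R * card W \<le> k\<close>
  define r where "r = 4 * M * \<gamma> / \<kappa>"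
  have "r > 0" using \<open>0 < m\<close> \<open>m \<le> M\<close> \<open>\<gamma> > 0\<close> \<open>2 * \<gamma> \<le> \<kappa>\<close> by (simp add: r_def)
  have "real (card W) * (2 * M / r + 1) ^ D \<le> real (card W) * (\<kappa> / \<gamma>) ^ D"
    using \<open>0 < m\<close> \<open>m \<le> M\<close> \<open>\<gamma> > 0\<close> \<open>2 * \<gamma> \<le> \<kappa>\<close>
    by (intro mult_left_mono power_mono) (simp_all add: r_def field_simps)
  also have "\<dots> = real k"
    using \<open>D > 0\<close> \<open>card W > 0\<close> by (simp add: \<gamma>_def \<kappa>_def power_divide)
  finally have "Delta S k \<le> ereal (2 + 6 * r / m)"
    using diam \<open>x0 \<in> S\<close> \<open>0 < m\<close> \<open>m \<le> M\<close> \<open>separated m S\<close> \<open>r > 0\<close>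
    by (intro Delta_le_theta_net[OF assms(1) \<open>x0 \<in> S\<close> assms(3) cover, of r M]) (auto simp: D_def)
  also have "6 * r / m = 24 * spread S * \<gamma> / \<kappa>"
    using \<open>spread S = M / m\<close> by (simp add: r_def algebra_simps)
  finally show ?thesis by (simp add: \<gamma>_def \<kappa>_def D_def)
qed

lemma real_root_le_mult_root:
  assumes "0 < n" "0 \<le> a" "x \<le> a ^ n * y"
  shows "root n x \<le> a * root n y"
proof -
  have "root n x \<le> root n (a ^ n * y)" using assms(1,3) by (rule real_root_le_mono)
  also have "\<dots> = a * root n y" using assms(1,2) by (simp add: real_root_mult real_root_power_cancel)
  finally show ?thesis .
qed

lemma root_Suc_le_three_spread:
  fixes S :: "'a::euclidean_space set"
  assumes "finite S" "2 \<le> card S" "k < card S"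
  shows "root DIM('a) (real k + 1) \<le> 3 * spread S"
proof -
  have "spread S \<ge> 1" using one_le_spread[OF assms(1,2)] .
  have "real k + 1 \<le> (2 * spread S + 1) ^ DIM('a)"
    using card_le_spread_pow[OF assms(1,2)] assms(3) by simp
  also have "\<dots> \<le> (3 * spread S) ^ DIM('a)"
    using \<open>spread S \<ge> 1\<close> by (intro power_mono) auto
  finally show ?thesis
    using real_root_le_mult_root[of "DIM('a)" "3 * spread S" "real k + 1" 1] \<open>spread S \<ge> 1\<close> by simp
qed

lemma Delta_le_spread_div_root_of_small:
  fixes S :: "'a::euclidean_space set"
  assumes "finite S" "2 \<le> card S" "1 \<le> c" "k < 2 ^ DIM('a) * c"
  shows "Delta S k \<le> ereal ((6 + 48 * root DIM('a) c) * spread S / root DIM('a) (real k + 1))"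
proof -
  define q where "q = root DIM('a) (real k + 1)"
  have "q > 0" by (simp add: q_def)
  have "root DIM('a) c \<ge> 1" using assms(3) by simp
  have "real (Suc k) \<le> real (2 ^ DIM('a) * c)" using assms(4) by (simp only: of_nat_le_iff Suc_le_eq)
  then have "q \<le> 2 * root DIM('a) c"
    unfolding q_def by (intro real_root_le_mult_root) auto
  then have "8 * q \<le> 6 + 48 * root DIM('a) c" using \<open>root DIM('a) c \<ge> 1\<close> by linarith
  then have "8 * spread S * q \<le> (6 + 48 * root DIM('a) c) * spread S"
    using mult_right_mono[of "8 * q" "6 + 48 * root DIM('a) c" "spread S"] one_le_spread[OF assms(1,2)] by (simp add: algebra_simps)
  then have "8 * spread S \<le> (6 + 48 * root DIM('a) c) * spread S / q"
    using \<open>q > 0\<close> by (simp add: pos_le_divide_eq)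
  then show ?thesis
    using Delta_le_spread[OF assms(1,2), of k] by (simp add: q_def order_trans)
qed

lemma Delta_le_spread_div_root_of_large:
  fixes S W :: "'a::euclidean_space set"
  assumes "finite S" "2 \<le> card S" "k < card S" "finite W"
    and cover: "\<And>x. norm x = 1 \<Longrightarrow> \<exists>w\<in>W. norm (x - w) < 1/4"
    and "2 ^ DIM('a) * card W \<le> k"
  shows "Delta S k \<le>
    ereal ((6 + 48 * root DIM('a) (card W)) * spread S / root DIM('a) (real k + 1))"
proof -
  define \<gamma> where "\<gamma> = root DIM('a) (card W)"
  define \<kappa> where "\<kappa> = root DIM('a) k"
  define q where "q = root DIM('a) (real k + 1)"
  define \<sigma> where "\<sigma> = spread S"
  have "q > 0" by (simp add: q_def)
  have "\<gamma> \<ge> 0" by (simp add: \<gamma>_def real_root_ge_zero)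
  have "\<sigma> \<ge> 1" using one_le_spread[OF assms(1,2)] by (simp add: \<sigma>_def)
  have "card W \<ge> 1" using sphere_cover_nonempty[OF cover] \<open>finite W\<close> by (simp add: Suc_le_eq card_gt_0_iff)
  moreover have "card W \<le> 2 ^ DIM('a) * card W" by simp
  ultimately have "real k + 1 \<le> 2 * real k" using assms(6) by linarith
  also have "\<dots> \<le> 2 ^ DIM('a) * real k" by (intro mult_right_mono self_le_power) auto
  finally have "q \<le> 2 * \<kappa>"
    unfolding q_def \<kappa>_def by (intro real_root_le_mult_root) auto
  have "2 \<le> 6 * \<sigma> / q"
    using root_Suc_le_three_spread[OF assms(1-3)] \<open>q > 0\<close> by (simp add: \<sigma>_def q_def pos_le_divide_eq)
  moreover have "24 * \<sigma> * \<gamma> / \<kappa> \<le> 48 * \<sigma> * \<gamma> / q"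
  proof -
    have "24 * \<sigma> * \<gamma> / \<kappa> = 48 * \<sigma> * \<gamma> / (2 * \<kappa>)" by simp
    also have "\<dots> \<le> 48 * \<sigma> * \<gamma> / q"
      using \<open>q \<le> 2 * \<kappa>\<close> \<open>q > 0\<close> \<open>\<sigma> \<ge> 1\<close> \<open>\<gamma> \<ge> 0\<close> by (intro divide_left_mono) auto
    finally show ?thesis .
  qed
  moreover have "(6 + 48 * \<gamma>) * \<sigma> / q = 6 * \<sigma> / q + 48 * \<sigma> * \<gamma> / q"
    by (simp add: add_divide_distrib algebra_simps)
  ultimately have "2 + 24 * \<sigma> * \<gamma> / \<kappa> \<le> (6 + 48 * \<gamma>) * \<sigma> / q" by linarith
  with Delta_le_two_plus_spread_mult_root[OF assms(1,2,4) cover assms(6)] show ?thesis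
    by (simp add: \<sigma>_def \<gamma>_def \<kappa>_def q_def order_trans)
qed

lemma Delta_le_spread_div_root:
  fixes S W :: "'a::euclidean_space set"
  assumes "finite W" and cover: "\<And>x. norm x = 1 \<Longrightarrow> \<exists>w\<in>W. norm (x - w) < 1/4"
    and "finite S" "2 \<le> card S" "k < card S"
  shows "Delta S k \<le>
    ereal ((6 + 48 * root DIM('a) (card W)) * spread S / root DIM('a) (real k + 1))"
proof (cases "2 ^ DIM('a) * card W \<le> k")
  case True
  then show ?thesis using Delta_le_spread_div_root_of_large[OF assms(3-5,1) cover] by blast
next
  case False
  moreover have "card W \<ge> 1"
    using sphere_cover_nonempty[OF cover] \<open>finite W\<close> by (simp add: Suc_le_eq card_gt_0_iff)
  ultimately show ?thesis using Delta_le_spread_div_root_of_small[OF assms(3,4)] by simp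
qed

theorem theorem6:
  assumes "DIM('a::euclidean_space) \<ge> 2"
  shows "\<exists>C>0. \<forall>n s k. n \<ge> 2 \<longrightarrow> k < n \<longrightarrow>
           delta TYPE('a) n s k \<le> ereal (C * s / (real k + 1) powr (1 / real DIM('a)))"
proof -
  obtain W :: "'a set" where "finite W" and cover: "\<And>x. norm x = 1 \<Longrightarrow> \<exists>w\<in>W. norm (x - w) < 1/4"
    using obtain_finite_sphere_cover[of "1/4"] by auto
  define C where "C = 6 + 48 * root DIM('a) (card W)"
  have "C > 0" unfolding C_def by (intro add_pos_nonneg) (auto simp: real_root_ge_zero)
  moreover have "delta TYPE('a) n s k \<le> ereal (C * s / (real k + 1) powr (1 / real DIM('a)))"
    if "n \<ge> 2" "k < n" for n s k
    unfolding delta_def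
  proof (rule Sup_least)
    fix x assume "x \<in> {Delta S k | S :: 'a set. finite S \<and> card S = n \<and> spread S \<le> s}"
    then obtain S :: "'a set" where "x = Delta S k" and S: "finite S" "card S = n" "spread S \<le> s"
      by blast
    have "Delta S k \<le> ereal (C * spread S / root DIM('a) (real k + 1))"
      using Delta_le_spread_div_root[OF \<open>finite W\<close> cover \<open>finite S\<close>] S that by (simp add: C_def)
    also have "\<dots> \<le> ereal (C * s / root DIM('a) (real k + 1))"
      using \<open>C > 0\<close> S(3) by (simp add: divide_right_mono)
    finally show "x \<le> ereal (C * s / (real k + 1) powr (1 / real DIM('a)))"
      using \<open>x = Delta S k\<close> by (simp add: root_powr_inverse)
  qed
  ultimately show ?thesis by blast
qed

end
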